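(* Let $K>1$ be real, $q\ge2$, and let $\mathbf{u}$ be a probability distribution on $[1:q]$. For all sufficiently large $n$, if $\mathbf{t}\in\mathcal{N}_{q,n}$ satisfies $|t_i-(n+1)u_i|\ge K\sqrt{n\log n}$ for some $i\in[1:q]$, then $$M_{n,\mathbf{u}}(\mathbf{t})\le n^{-\frac12(K^2-1)}.$$
   Context: $\mathcal{N}_{q,n}=\{\mathbf{t}\in\mathbb{Z}_{\ge0}^q:\sum_it_i=n\}$; $M_{n,\mathbf{u}}(\mathbf{t})=\frac{n!}{t_1!\cdots t_q!}\prod_iu_i^{t_i}$ (with $0^0=1$). Logarithms base 2. *)

theory Defs
  imports "HOL-Analysis.Analysis"
begin

definition types_set :: "nat \<Rightarrow> nat \<Rightarrow> (nat \<Rightarrow> nat) set" where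
  "types_set q n = {t. (\<forall>i. i \<notin> {1..q} \<longrightarrow> t i = 0) \<and> (\<Sum>i=1..q. t i) = n}"

definition multinom_prob :: "nat \<Rightarrow> nat \<Rightarrow> (nat \<Rightarrow> real) \<Rightarrow> (nat \<Rightarrow> nat) \<Rightarrow> real" where
  "multinom_prob q n u t = fact n / (\<Prod>i=1..q. fact (t i)) * (\<Prod>i=1..q. u i ^ t i)"

end

theory Submission
  imports Defs "HOL-Probability.Hoeffding"
begin

text \<open>
  Splitting off the coordinate \<open>i\<close> with the large deviation and bounding the multinomial
  expansion of the remaining coordinates by \<open>(1 - u\<^sub>i)\<^bsup>n - t\<^sub>i\<^esup>\<close> shows that \<open>M\<^sub>n\<^sub>,\<^sub>u(t)\<close> is at
  most the binomial probability \<open>P(Bin(n, u\<^sub>i) = t\<^sub>i)\<close>. Hoeffding's inequality bounds this by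
  \<open>2 exp(-2 (t\<^sub>i - n u\<^sub>i)\<^sup>2 / n)\<close>. Since \<open>log\<^sub>2 n \<ge> ln n\<close>, a deviation of \<open>K \<surd>(n log\<^sub>2 n)\<close>
  from \<open>(n + 1) u\<^sub>i\<close> makes the exponent at least \<open>K\<^sup>2 ln n - 1\<close>, which leaves enough room to
  absorb the factor 2 once \<open>n \<ge> 6\<close>.
\<close>

definition multinomial_term :: "'a set \<Rightarrow> ('a \<Rightarrow> real) \<Rightarrow> ('a \<Rightarrow> nat) \<Rightarrow> real" where
  "multinomial_term S u t =
     fact (\<Sum>j\<in>S. t j) / (\<Prod>j\<in>S. fact (t j)) * (\<Prod>j\<in>S. u j ^ t j)"

lemma multinomial_term_insert:
  assumes "finite S" "a \<notin> S"
  shows "multinomial_term (insert a S) u t =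
           real ((t a + sum t S) choose t a) * u a ^ t a * multinomial_term S u t"
proof -
  define m where "m = sum t S"
  define P where "P = (\<Prod>j\<in>S. fact (t j) :: real)"
  define Q where "Q = (\<Prod>j\<in>S. u j ^ t j)"
  have "fact (t a) * fact m * ((t a + m) choose t a) = fact (t a + m)"
    using binomial_fact_lemma[of "t a" "t a + m"] by simp
  then have fact_split:
      "(fact (t a + m) :: real) = fact (t a) * fact m * real ((t a + m) choose t a)"
    by (metis of_nat_fact of_nat_mult)
  have "multinomial_term (insert a S) u t = fact (t a + m) / (fact (t a) * P) * (u a ^ t a * Q)"
    using assms by (simp add: multinomial_term_def m_def P_def Q_def)
  also have "\<dots> = real ((t a + m) choose t a) * u a ^ t a * (fact m / P * Q)"
    unfolding fact_split by simp
  finally show ?thesis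
    by (simp add: multinomial_term_def m_def P_def Q_def)
qed

lemma multinomial_term_le_sum_power:
  assumes "finite S" "\<And>j. j \<in> S \<Longrightarrow> u j \<ge> 0"
  shows "multinomial_term S u t \<le> sum u S ^ sum t S"
  using assms
proof (induction S rule: finite_induct)
  case empty
  then show ?case by (simp add: multinomial_term_def)
next
  case (insert a S)
  define m where "m = t a + sum t S"
  define x where "x = u a"
  define y where "y = sum u S"
  have "x \<ge> 0" "y \<ge> 0"
    using insert.prems unfolding x_def y_def by (auto intro: sum_nonneg)
  have "multinomial_term (insert a S) u t = real (m choose t a) * x ^ t a * multinomial_term S u t"
    unfolding m_def x_def using insert.hyps by (rule multinomial_term_insert)
  also have "\<dots> \<le> real (m choose t a) * x ^ t a * y ^ (m - t a)"
    using insert \<open>x \<ge> 0\<close> unfolding m_def y_def by (intro mult_left_mono) auto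
  also have "\<dots> \<le> (\<Sum>k\<le>m. real (m choose k) * x ^ k * y ^ (m - k))"
    by (rule member_le_sum[where f = "\<lambda>k. real (m choose k) * x ^ k * y ^ (m - k)"])
       (use \<open>x \<ge> 0\<close> \<open>y \<ge> 0\<close> in \<open>auto simp: m_def\<close>)
  also have "\<dots> = (x + y) ^ m"
    by (rule binomial_ring[symmetric])
  finally show ?case
    using insert.hyps unfolding m_def x_def y_def by simp
qed

lemma multinom_prob_eq_multinomial_term:
  assumes "t \<in> types_set q n"
  shows "multinom_prob q n u t = multinomial_term {1..q} u t"
  using assms by (simp add: types_set_def multinom_prob_def multinomial_term_def)

lemma component_of_distribution_bounds:
  fixes u :: "'a \<Rightarrow> real"
  assumes "finite S" "\<And>i. i \<in> S \<Longrightarrow> u i \<ge> 0" "sum u S = 1" "i \<in> S"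
  shows "u i \<in> {0..1}"
  using member_le_sum[of i S u] assms by auto

lemma multinom_prob_le_binomial_pmf:
  assumes u_nonneg: "\<And>i. i \<in> {1..q} \<Longrightarrow> u i \<ge> 0"
    and u_sum: "(\<Sum>i=1..q. u i) = 1"
    and t: "t \<in> types_set q n" and i: "i \<in> {1..q}"
  shows "multinom_prob q n u t \<le> pmf (binomial_pmf n (u i)) (t i)"
proof -
  define S where "S = {1..q} - {i}"
  have S_split: "{1..q} = insert i S" "i \<notin> S" "finite S"
    using i unfolding S_def by auto
  have t_sum: "t i + sum t S = n"
    using t S_split by (simp add: types_set_def)
  have u_rest: "sum u S = 1 - u i"
    using u_sum S_split by simp
  have p: "u i \<in> {0..1}"
    using u_nonneg u_sum i by (intro component_of_distribution_bounds) auto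
  have "multinom_prob q n u t = real (n choose t i) * u i ^ t i * multinomial_term S u t"
    using t S_split t_sum by (simp add: multinom_prob_eq_multinomial_term multinomial_term_insert)
  also have "\<dots> \<le> real (n choose t i) * u i ^ t i * (1 - u i) ^ (n - t i)"
    using multinomial_term_le_sum_power[of S u t] S_split u_rest t_sum u_nonneg p
    by (intro mult_left_mono) (auto simp: S_def)
  also have "\<dots> = pmf (binomial_pmf n (u i)) (t i)"
    using p by simp
  finally show ?thesis .
qed

lemma binomial_pmf_le_Hoeffding:
  assumes "p \<in> {0..1}" "n > 0"
  shows "pmf (binomial_pmf n p) k \<le> 2 * exp (- (2 * (real k - n * p)\<^sup>2 / n))"
proof -
  interpret binomial_distribution n p
    using assms by unfold_locales
  define e where "e = \<bar>real k - n * p\<bar>"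
  have "pmf (binomial_pmf n p) k = measure_pmf.prob (binomial_pmf n p) {k}"
    by (simp add: measure_pmf_single)
  also have "\<dots> \<le> measure_pmf.prob (binomial_pmf n p) {x. \<bar>real x - n * p\<bar> \<ge> e}"
    by (rule measure_pmf.finite_measure_mono) (auto simp: e_def)
  also have "\<dots> \<le> 2 * exp (-2 * e\<^sup>2 / n)"
    by (rule prob_abs_ge) (use assms in \<open>auto simp: e_def\<close>)
  finally show ?thesis
    by (simp add: e_def)
qed

lemma deviation_exponent_lower_bound:
  fixes K p :: real
  assumes "K \<ge> 1" "n \<ge> 2" "p \<in> {0..1}"
    and dev: "\<bar>real k - (real n + 1) * p\<bar> \<ge> K * sqrt (real n * log 2 (real n))"
  shows "2 * (real k - n * p)\<^sup>2 / n \<ge> K\<^sup>2 * ln n - 1"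
proof -
  define L where "L = log 2 (real n)"
  define a where "a = K * sqrt (real n * L)"
  define e where "e = \<bar>real k - n * p\<bar>"
  have "L \<ge> 1"
    using assms(2) unfolding L_def by simp
  have "ln n \<le> L"
    unfolding L_def log_def using assms(2) ln_2_less_1 by (simp add: divide_simps)
  have "real n * L \<ge> 1"
    using mult_mono[of 1 "real n" 1 L] \<open>L \<ge> 1\<close> assms(2) by simp
  then have "a \<ge> 1"
    unfolding a_def using mult_mono[of 1 K 1 "sqrt (real n * L)"] assms(1) by simp
  have "a\<^sup>2 = K\<^sup>2 * (real n * L)"
    unfolding a_def using \<open>real n * L \<ge> 1\<close> by (simp add: power_mult_distrib)
  have "real k - (real n + 1) * p = (real k - n * p) - p"
    by (simp add: algebra_simps)
  then have "\<bar>real k - (real n + 1) * p\<bar> \<le> e + p"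
    unfolding e_def using assms(3) abs_triangle_ineq4[of "real k - n * p" p] by simp
  then have "e \<ge> a - 1"
    using dev assms(3) unfolding a_def L_def by simp
  then have "e\<^sup>2 \<ge> (a - 1)\<^sup>2"
    using \<open>a \<ge> 1\<close> by (intro power_mono) auto
  moreover have "2 * (a - 1)\<^sup>2 = a\<^sup>2 - 2 + (a - 2)\<^sup>2"
    by (simp add: power2_eq_square algebra_simps)
  moreover have "(a - 2)\<^sup>2 \<ge> 0"
    by simp
  ultimately have "K\<^sup>2 * (real n * L) - 2 \<le> 2 * e\<^sup>2"
    using \<open>a\<^sup>2 = _\<close> by linarith
  have "K\<^sup>2 * L - 2 / n = (K\<^sup>2 * (real n * L) - 2) / n"
    using assms(2) by (simp add: field_simps)
  also have "\<dots> \<le> 2 * e\<^sup>2 / n"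
    using \<open>_ \<le> 2 * e\<^sup>2\<close> by (intro divide_right_mono) auto
  finally have "K\<^sup>2 * L - 2 / n \<le> 2 * e\<^sup>2 / n" .
  moreover have "K\<^sup>2 * ln n \<le> K\<^sup>2 * L"
    using \<open>ln n \<le> L\<close> by (intro mult_left_mono) auto
  moreover have "2 / real n \<le> 1"
    using assms(2) by simp
  ultimately show ?thesis
    unfolding e_def by simp
qed

lemma two_exp_le_powr:
  fixes K x :: real
  assumes "K \<ge> 1" "n \<ge> 6" "x \<ge> K\<^sup>2 * ln n - 1"
  shows "2 * exp (- x) \<le> real n powr (- (K\<^sup>2 - 1) / 2)"
proof -
  have "ln 2 + 1 = ln (2 * exp 1 :: real)"
    by (simp add: ln_mult)
  also have "\<dots> \<le> ln n"
    using exp_le assms(2) by (subst ln_le_cancel_iff) auto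
  finally have "ln 2 + 1 \<le> ln n" .
  moreover have "1 * ln n \<le> (K\<^sup>2 + 1) / 2 * ln n"
    using assms(1,2) by (intro mult_right_mono) (auto simp: one_le_power)
  ultimately have "ln 2 - x \<le> - (K\<^sup>2 - 1) / 2 * ln n"
    using assms(3) by (simp add: field_simps)
  then have "exp (ln 2 - x) \<le> exp (- (K\<^sup>2 - 1) / 2 * ln n)"
    by simp
  then show ?thesis
    using assms(2) by (simp add: exp_diff powr_def exp_minus field_simps)
qed

theorem corollary3:
  fixes K :: real and q :: nat and u :: "nat \<Rightarrow> real"
  assumes "K > 1" and "q \<ge> 2"
    and "\<And>i. i \<in> {1..q} \<Longrightarrow> u i \<ge> 0"
    and "(\<Sum>i=1..q. u i) = 1"
  shows "\<forall>\<^sub>F n in sequentially. \<forall>t \<in> types_set q n.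
           (\<exists>i\<in>{1..q}. \<bar>real (t i) - (real n + 1) * u i\<bar> \<ge> K * sqrt (real n * log 2 (real n)))
           \<longrightarrow> multinom_prob q n u t \<le> real n powr (- (K\<^sup>2 - 1) / 2)"
proof -
  have bound: "multinom_prob q n u t \<le> real n powr (- (K\<^sup>2 - 1) / 2)"
    if "n \<ge> 6" "t \<in> types_set q n" "i \<in> {1..q}"
      and dev: "\<bar>real (t i) - (real n + 1) * u i\<bar> \<ge> K * sqrt (real n * log 2 (real n))"
    for n t i
  proof -
    have p: "u i \<in> {0..1}"
      using assms(3,4) \<open>i \<in> {1..q}\<close> by (intro component_of_distribution_bounds) auto
    have "multinom_prob q n u t \<le> pmf (binomial_pmf n (u i)) (t i)"
      using assms(3,4) that(2,3) by (rule multinom_prob_le_binomial_pmf)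
    also have "\<dots> \<le> 2 * exp (- (2 * (real (t i) - n * u i)\<^sup>2 / n))"
      using p \<open>n \<ge> 6\<close> by (intro binomial_pmf_le_Hoeffding) auto
    also have "\<dots> \<le> real n powr (- (K\<^sup>2 - 1) / 2)"
    proof (rule two_exp_le_powr)
      show "K\<^sup>2 * ln n - 1 \<le> 2 * (real (t i) - n * u i)\<^sup>2 / n"
        using p dev \<open>K > 1\<close> \<open>n \<ge> 6\<close> by (intro deviation_exponent_lower_bound) simp_all
    qed (use \<open>K > 1\<close> \<open>n \<ge> 6\<close> in simp_all)
    finally show ?thesis .
  qed
  show ?thesis
    using eventually_ge_at_top[of "6::nat"] by eventually_elim (use bound in blast)
qed

end
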